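(* Let $A^n,A^{n+1}$ be real $N\times N$ matrices satisfying condition (M), let $D=\mathrm{diag}(d_{11},\dots,d_{NN})$ with $d_{ii}>0$ and $\sum_i d_{ii}a^{n+1}_{ij}\ge0$ for all $j$, and let $B^n(\cdot),B^{n+1}(\cdot)$ be limiter-dependent matrices with $\sum_i d_{ii}b^{k}_{ij}(\alpha)=0$ for all $j$, all $\alpha$, $k=n,n+1$. Let $\sigma\in[0,1]$, $\gamma\in(0,1)$, $s_j=d_{jj}+\Delta t\,\sigma\sum_i d_{ii}a^{n+1}_{ij}$, and let $\Delta t>0$ satisfy $$\Delta t\max\left\{(1-\sigma)\|DB^n(\mathbf 1)\|_1,\ \sigma\|DB^{n+1}(\mathbf 1)\|_1\right\}\le\gamma\min_j s_j .$$ Let $y^n,g\in\mathbb R^N$, let $(\alpha^{n,p},\alpha^{n+1,p})\in[0,1]^{N-1}\times[0,1]^{N-1}$ for $p\ge1$ be arbitrary, set $y^{n+1,0}=y^n$ and define $y^{n+1,p}$ for $p\ge1$ by $$\left[E+\Delta t\,\sigma A^{n+1}\right]y^{n+1,p}=\left[E-\Delta t(1-\sigma)\left(A^n-B^n(\alpha^{n,p})\right)\right]y^n+\Delta t\,\sigma B^{n+1}(\alpha^{n+1,p})y^{n+1,p-1}+\Delta t\,g .$$ Put $T_p=\Delta t(1-\sigma)[E+\Delta t\sigma A^{n+1}]^{-1}B^n(\alpha^{n,p})$, $Q_p=\Delta t\,\sigma[E+\Delta t\sigma A^{n+1}]^{-1}B^{n+1}(\alpha^{n+1,p})$, $r=[E+\Delta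 t\sigma A^{n+1}]^{-1}\{[E-\Delta t(1-\sigma)A^n]y^n+\Delta t\,g\}$. Then for every $p\ge1$ $$y^{n+1,p}=\Big[\sum_{i=1}^pQ_pQ_{p-1}\cdots Q_{i+1}T_i+Q_pQ_{p-1}\cdots Q_1\Big]y^n+\Big[E+\sum_{i=2}^pQ_pQ_{p-1}\cdots Q_i\Big]r$$ (empty products being $E$), and $\|T_p\|_1\le\gamma$, $\|Q_p\|_1\le\gamma$ for all $p$; in particular each product of $m$ factors from $\{T_i\}\cup\{Q_i\}$ appearing above has $\|\cdot\|_1$-norm at most $\gamma^m$, so the terms are dominated, uniformly in $p$, by those of a convergent geometric series.
   Context: $E$ is the $N\times N$ identity. Condition (M) on a real $N\times N$ matrix $A=\{a_{ij}\}$: $a_{ii}\ge 0$ for all $i$ and $a_{ij}\le 0$ for all $i\ne j$. Norms: $\|y\|_1=\sum_i|y_i|$, $\|M\|_1=\max_j\sum_i|m_{ij}|$. A limiter-dependent matrix is a map $\alpha=(\alpha_1,\dots,\alpha_{N-1})\in\mathbb R^{N-1}\mapsto B(\alpha)=\{b_{ij}(\alpha)\}$ ($N\times N$) of the form $b_{ij}(\alpha)=\alpha_{\kappa(i,j)}\beta_{ij}$ for $i\ne j$ and $b_{ii}(\alpha)=-\sum_{j\ne i}b_{ij}(\alpha)$, where $\beta_{ij}\le0$ are fixed numbers and $\kappa(i,j)\in\{1,\dots,N-1\}$ are fixed indices. $\mathbf 1$ is the vector with all entries $1$. *)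

theory Defs
  imports "HOL-Analysis.Analysis"
begin

definition condM :: "real^'n^'n \<Rightarrow> bool" where
  "condM A \<longleftrightarrow> (\<forall>i. A$i$i \<ge> 0) \<and> (\<forall>i j. i \<noteq> j \<longrightarrow> A$i$j \<le> 0)"

definition mat_norm1 :: "real^'n^'n \<Rightarrow> real" where
  "mat_norm1 M = Max (range (\<lambda>j. \<Sum>i\<in>UNIV. \<bar>M$i$j\<bar>))"

definition diag_mat :: "real^'n \<Rightarrow> real^'n^'n" where
  "diag_mat d = (\<chi> i j. if i = j then d$i else 0)"

text \<open>Limiter-dependent matrix: limiter vector alpha is indexed by 1..N-1
  (entries outside this range are never used when kappa maps into 1..N-1).\<close>
definition limiter_matrix ::
  "real^'n^'n \<Rightarrow> ('n \<Rightarrow> 'n \<Rightarrow> nat) \<Rightarrow> (nat \<Rightarrow> real) \<Rightarrow> real^'n^'n" where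
  "limiter_matrix \<beta> \<kappa> \<alpha> =
     (\<chi> i j. if i = j then - (\<Sum>k\<in>UNIV - {i}. \<alpha> (\<kappa> i k) * \<beta>$i$k)
             else \<alpha> (\<kappa> i j) * \<beta>$i$j)"

definition limiter_data :: "real^'n^'n \<Rightarrow> ('n \<Rightarrow> 'n \<Rightarrow> nat) \<Rightarrow> bool" where
  "limiter_data \<beta> \<kappa> \<longleftrightarrow>
     (\<forall>i j. i \<noteq> j \<longrightarrow> \<beta>$i$j \<le> 0 \<and> \<kappa> i j \<in> {1..CARD('n) - 1})"

text \<open>Ordered product: lprod Q i p = Q p ** Q (p-1) ** ... ** Q i, identity if i > p.\<close>
fun lprod :: "(nat \<Rightarrow> real^'n^'n) \<Rightarrow> nat \<Rightarrow> nat \<Rightarrow> real^'n^'n" where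
  "lprod Q i 0 = (if i = 0 then Q 0 else mat 1)"
| "lprod Q i (Suc p) = (if i \<le> Suc p then Q (Suc p) ** lprod Q i p else mat 1)"

end

theory Submission
  imports Defs
begin

(* Scaling the rows of M = E + dt sigma A1 by D gives a matrix with nonnegative diagonal,
   nonpositive off-diagonal entries and column sums s_j; such a matrix is column diagonally
   dominant with margin c = min_j s_j, so c |x|_1 <= |D M x|_1.  Hence M is invertible and
   c |M^-1 u|_1 <= |D u|_1, which turns the 1-norm of M^-1 B into a column bound for D B.
   Since the columns of D B(alpha) sum to zero, their 1-norms are twice the moduli of the
   off-diagonal parts, which grow with alpha; so |D B(alpha)|_1 <= |D B(1)|_1 and the CFL
   condition gives |T_p|_1, |Q_p|_1 <= gamma.  Solving the defining equation for y^(n+1,p)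
   gives y^p = r + T_p y^n + Q_p y^(p-1), whose unrolling is the stated representation. *)

section \<open>Vector and matrix 1-norms\<close>

definition vec_norm1 :: "real^'n \<Rightarrow> real" where
  "vec_norm1 x = (\<Sum>i\<in>UNIV. \<bar>x$i\<bar>)"

lemma vec_norm1_nonneg: "0 \<le> vec_norm1 x"
  by (simp add: vec_norm1_def sum_nonneg)

lemma vec_norm1_le_0_imp_eq_0:
  assumes "vec_norm1 x \<le> 0" shows "x = 0"
proof -
  have "(\<Sum>i\<in>UNIV. \<bar>x$i\<bar>) = 0"
    using assms vec_norm1_nonneg[of x] unfolding vec_norm1_def by linarith
  then show ?thesis by (simp add: sum_nonneg_eq_0_iff vec_eq_iff)
qed

lemma vec_norm1_scaleR: "vec_norm1 (t *\<^sub>R x) = \<bar>t\<bar> * vec_norm1 x"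
  by (simp add: vec_norm1_def abs_mult sum_distrib_left)

lemma mat_norm1_eq_Max_column: "mat_norm1 X = Max (range (\<lambda>j. vec_norm1 (column j X)))"
  by (simp add: mat_norm1_def vec_norm1_def column_def)

lemma vec_norm1_column_le_mat_norm1: "vec_norm1 (column j X) \<le> mat_norm1 X"
  unfolding mat_norm1_eq_Max_column by (rule Max_ge) auto

lemma mat_norm1_le: "(\<And>j. vec_norm1 (column j X) \<le> b) \<Longrightarrow> mat_norm1 X \<le> b"
  unfolding mat_norm1_eq_Max_column by (subst Max_le_iff) auto

lemma mat_norm1_attained: "\<exists>j. mat_norm1 X = vec_norm1 (column j X)"
proof -
  have "mat_norm1 X \<in> range (\<lambda>j. vec_norm1 (column j X))"
    unfolding mat_norm1_eq_Max_column by (rule Max_in) auto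
  then show ?thesis by auto
qed

lemma mat_norm1_nonneg: "0 \<le> mat_norm1 X"
  using vec_norm1_column_le_mat_norm1 vec_norm1_nonneg order_trans by blast

lemma mat_norm1_mat_1: "mat_norm1 (mat 1 :: real^'n^'n) = 1"
proof -
  have "vec_norm1 (column j (mat 1 :: real^'n^'n)) = 1" for j
    by (simp add: vec_norm1_def column_def mat_def if_distrib cong: if_cong)
  then show ?thesis unfolding mat_norm1_eq_Max_column by simp
qed

lemma column_scaleR: "column j (t *\<^sub>R X) = t *\<^sub>R column j X"
  by (simp add: column_def vec_eq_iff)

lemma mat_norm1_scaleR: "mat_norm1 (t *\<^sub>R X) = \<bar>t\<bar> * mat_norm1 X"
proof (rule antisym)
  show "mat_norm1 (t *\<^sub>R X) \<le> \<bar>t\<bar> * mat_norm1 X"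
    by (rule mat_norm1_le)
      (simp add: column_scaleR vec_norm1_scaleR mult_left_mono vec_norm1_column_le_mat_norm1)
  obtain j where "mat_norm1 X = vec_norm1 (column j X)"
    using mat_norm1_attained by blast
  then show "\<bar>t\<bar> * mat_norm1 X \<le> mat_norm1 (t *\<^sub>R X)"
    using vec_norm1_column_le_mat_norm1[of j "t *\<^sub>R X"] by (simp add: column_scaleR vec_norm1_scaleR)
qed

lemma column_matrix_matrix_mult: "column j (A ** B) = A *v column j B"
  by (simp add: vec_eq_iff column_def matrix_matrix_mult_def matrix_vector_mult_def)

lemma vec_norm1_matrix_vector_mult_le:
  fixes A :: "real^'n^'n"
  shows "vec_norm1 (A *v x) \<le> mat_norm1 A * vec_norm1 x"
proof -
  have "vec_norm1 (A *v x) \<le> (\<Sum>i\<in>UNIV. \<Sum>k\<in>UNIV. \<bar>A$i$k\<bar> * \<bar>x$k\<bar>)"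
    unfolding vec_norm1_def matrix_vector_mult_def
    by (auto intro!: sum_mono order_trans[OF sum_abs] simp: abs_mult)
  also have "\<dots> = (\<Sum>k\<in>UNIV. vec_norm1 (column k A) * \<bar>x$k\<bar>)"
    by (subst sum.swap) (simp add: vec_norm1_def column_def sum_distrib_right)
  also have "\<dots> \<le> (\<Sum>k\<in>UNIV. mat_norm1 A * \<bar>x$k\<bar>)"
    by (intro sum_mono mult_right_mono vec_norm1_column_le_mat_norm1) simp
  finally show ?thesis by (simp add: vec_norm1_def sum_distrib_left)
qed

lemma mat_norm1_mult_le: "mat_norm1 (A ** B) \<le> mat_norm1 A * mat_norm1 (B :: real^'n^'n)"
  by (rule mat_norm1_le, unfold column_matrix_matrix_mult)
    (meson vec_norm1_matrix_vector_mult_le vec_norm1_column_le_mat_norm1 mat_norm1_nonneg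
      mult_left_mono order_trans)

lemma mat_norm1_mult_le_if_vec_norm1_le:
  fixes X Y L :: "real^'n^'n"
  assumes "\<And>u. c * vec_norm1 (X *v u) \<le> vec_norm1 (Y *v u)"
  shows "c * mat_norm1 (X ** L) \<le> mat_norm1 (Y ** L)"
proof -
  obtain j where "mat_norm1 (X ** L) = vec_norm1 (column j (X ** L))"
    using mat_norm1_attained by blast
  then show ?thesis
    using assms[of "column j L"] vec_norm1_column_le_mat_norm1[of j "Y ** L"]
    by (simp add: column_matrix_matrix_mult)
qed

section \<open>Column diagonal dominance\<close>

lemma matrix_inv_right: "invertible A \<Longrightarrow> A ** matrix_inv A = mat 1"
  and matrix_inv_left: "invertible A \<Longrightarrow> matrix_inv A ** A = mat 1"
  unfolding invertible_def matrix_inv_def by (metis (mono_tags, lifting) someI_ex)+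

lemma diag_mat_mult_nth: "(diag_mat d ** B)$i$j = d$i * B$i$j"
  by (simp add: diag_mat_def matrix_matrix_mult_def if_distrib[of "\<lambda>x. x * _"] cong: if_cong)

lemma vec_norm1_ge_if_col_diag_dominant:
  fixes K :: "real^'n^'n"
  assumes dom: "\<And>j. c \<le> \<bar>K$j$j\<bar> - (\<Sum>i\<in>UNIV-{j}. \<bar>K$i$j\<bar>)"
  shows "c * vec_norm1 x \<le> vec_norm1 (K *v x)"
proof -
  define a where "a i j = \<bar>K$i$j\<bar> * \<bar>x$j\<bar>" for i j
  have row: "a i i - (\<Sum>j\<in>UNIV-{i}. a i j) \<le> \<bar>(K *v x)$i\<bar>" for i
  proof -
    have "(K *v x)$i = K$i$i * x$i + (\<Sum>j\<in>UNIV-{i}. K$i$j * x$j)"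
      by (simp add: matrix_vector_mult_def sum.remove)
    moreover have "\<bar>\<Sum>j\<in>UNIV-{i}. K$i$j * x$j\<bar> \<le> (\<Sum>j\<in>UNIV-{i}. a i j)"
      unfolding a_def abs_mult[symmetric] by (rule sum_abs)
    ultimately show ?thesis
      unfolding a_def abs_mult[symmetric] by linarith
  qed
  have offdiag_swap: "(\<Sum>j\<in>UNIV. \<Sum>i\<in>UNIV-{j}. a i j) = (\<Sum>i\<in>UNIV. \<Sum>j\<in>UNIV-{i}. a i j)"
    by (simp add: sum_diff1 sum_subtractf sum.swap[of a])
  have "c * vec_norm1 x \<le> (\<Sum>j\<in>UNIV. (\<bar>K$j$j\<bar> - (\<Sum>i\<in>UNIV-{j}. \<bar>K$i$j\<bar>)) * \<bar>x$j\<bar>)"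
    unfolding vec_norm1_def sum_distrib_left by (intro sum_mono mult_right_mono dom) simp
  also have "\<dots> = (\<Sum>j\<in>UNIV. a j j - (\<Sum>i\<in>UNIV-{j}. a i j))"
    by (simp add: a_def left_diff_distrib sum_distrib_right)
  also have "\<dots> = (\<Sum>i\<in>UNIV. a i i - (\<Sum>j\<in>UNIV-{i}. a i j))"
    by (simp add: sum_subtractf offdiag_swap)
  also have "\<dots> \<le> vec_norm1 (K *v x)"
    unfolding vec_norm1_def by (rule sum_mono, rule row)
  finally show ?thesis .
qed

lemma Z_matrix_col_dominance_eq_col_sum:
  fixes K :: "real^'n^'n"
  assumes "\<And>i. i \<noteq> j \<Longrightarrow> K$i$j \<le> 0" and "0 \<le> K$j$j"
  shows "\<bar>K$j$j\<bar> - (\<Sum>i\<in>UNIV-{j}. \<bar>K$i$j\<bar>) = (\<Sum>i\<in>UNIV. K$i$j)"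
proof -
  have "(\<Sum>i\<in>UNIV-{j}. \<bar>K$i$j\<bar>) = (\<Sum>i\<in>UNIV-{j}. - K$i$j)"
    using assms(1) by (intro sum.cong) auto
  then show ?thesis using assms(2) by (simp add: sum.remove[of UNIV j] sum_negf)
qed

lemma invertible_if_vec_norm1_bounded_below:
  fixes M Y :: "real^'n^'n"
  assumes "0 < c" and bound: "\<And>x. c * vec_norm1 x \<le> vec_norm1 ((Y ** M) *v x)"
  shows "invertible M"
proof -
  have "x = 0" if "M *v x = 0" for x
  proof (rule vec_norm1_le_0_imp_eq_0)
    have "c * vec_norm1 x \<le> 0"
      using bound[of x] that by (simp add: matrix_vector_mul_assoc[symmetric] vec_norm1_def)
    then show "vec_norm1 x \<le> 0" using \<open>0 < c\<close> by (simp add: mult_le_0_iff)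
  qed
  then show ?thesis using matrix_left_invertible_ker invertible_left_inverse by blast
qed

lemma vec_norm1_matrix_inv_le:
  fixes M Y :: "real^'n^'n"
  assumes "invertible M" and "\<And>x. c * vec_norm1 x \<le> vec_norm1 ((Y ** M) *v x)"
  shows "c * vec_norm1 (matrix_inv M *v u) \<le> vec_norm1 (Y *v u)"
proof -
  have "M *v (matrix_inv M *v u) = u"
    by (simp add: matrix_vector_mul_assoc matrix_inv_right[OF assms(1)])
  then show ?thesis
    using assms(2)[of "matrix_inv M *v u"] by (simp add: matrix_vector_mul_assoc[symmetric])
qed

lemma vec_norm1_scaled_implicit_matrix_ge:
  fixes A :: "real^'n^'n"
  assumes "condM A" and "0 \<le> t" and "\<forall>i. 0 \<le> d$i"
    and "\<And>j. c \<le> d$j + t * (\<Sum>i\<in>UNIV. d$i * A$i$j)"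
  shows "c * vec_norm1 x \<le> vec_norm1 ((diag_mat d ** (mat 1 + t *\<^sub>R A)) *v x)"
proof (rule vec_norm1_ge_if_col_diag_dominant)
  fix j
  let ?K = "diag_mat d ** (mat 1 + t *\<^sub>R A)"
  have K: "?K$i$j = (if i = j then d$i else 0) + t * (d$i * A$i$j)" for i
    by (simp add: diag_mat_mult_nth mat_def algebra_simps)
  have "\<bar>?K$j$j\<bar> - (\<Sum>i\<in>UNIV-{j}. \<bar>?K$i$j\<bar>) = (\<Sum>i\<in>UNIV. ?K$i$j)"
    using assms(1-3) unfolding condM_def
    by (intro Z_matrix_col_dominance_eq_col_sum) (simp_all add: K mult_nonneg_nonpos)
  also have "\<dots> = d$j + t * (\<Sum>i\<in>UNIV. d$i * A$i$j)"
    by (simp add: K sum.distrib sum_distrib_left)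
  finally show "c \<le> \<bar>?K$j$j\<bar> - (\<Sum>i\<in>UNIV-{j}. \<bar>?K$i$j\<bar>)" using assms(4) by simp
qed

lemma implicit_matrix_inverse_bound:
  fixes A :: "real^'n^'n"
  assumes "condM A" and "0 \<le> t" and d: "\<forall>i. 0 < d$i"
    and "\<forall>j. 0 \<le> (\<Sum>i\<in>UNIV. d$i * A$i$j)"
    and c_def: "c = Min (range (\<lambda>j. d$j + t * (\<Sum>i\<in>UNIV. d$i * A$i$j)))"
  shows "0 < c" and "invertible (mat 1 + t *\<^sub>R A)"
    and "c * vec_norm1 (matrix_inv (mat 1 + t *\<^sub>R A) *v u) \<le> vec_norm1 (diag_mat d *v u)"
proof -
  have "c \<in> range (\<lambda>j. d$j + t * (\<Sum>i\<in>UNIV. d$i * A$i$j))"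
    unfolding c_def by (rule Min_in) auto
  then show "0 < c"
    using assms(2-4) by (auto intro: add_pos_nonneg)
  have lower: "c * vec_norm1 x \<le> vec_norm1 ((diag_mat d ** (mat 1 + t *\<^sub>R A)) *v x)" for x
    using assms(1,2) d by (intro vec_norm1_scaled_implicit_matrix_ge) (auto simp: c_def less_imp_le)
  show inv: "invertible (mat 1 + t *\<^sub>R A)"
    by (rule invertible_if_vec_norm1_bounded_below[OF \<open>0 < c\<close> lower])
  show "c * vec_norm1 (matrix_inv (mat 1 + t *\<^sub>R A) *v u) \<le> vec_norm1 (diag_mat d *v u)"
    by (rule vec_norm1_matrix_inv_le[OF inv lower])
qed

section \<open>Limiter-dependent matrices\<close>

lemma limiter_matrix_offdiag: "i \<noteq> j \<Longrightarrow> limiter_matrix \<beta> \<kappa> \<alpha> $i$j = \<alpha> (\<kappa> i j) * \<beta>$i$j"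
  by (simp add: limiter_matrix_def)

lemma sum_abs_eq_if_sum_eq_0:
  fixes f :: "'a \<Rightarrow> real"
  assumes "finite S" and "j \<in> S" and "sum f S = 0" and "\<And>i. i \<in> S \<Longrightarrow> i \<noteq> j \<Longrightarrow> f i \<le> 0"
  shows "(\<Sum>i\<in>S. \<bar>f i\<bar>) = - 2 * (\<Sum>i\<in>S-{j}. f i)"
proof -
  have rest: "(\<Sum>i\<in>S-{j}. \<bar>f i\<bar>) = - (\<Sum>i\<in>S-{j}. f i)"
    using assms(4) by (auto simp: sum_negf[symmetric] intro!: sum.cong)
  have "f j = - (\<Sum>i\<in>S-{j}. f i)"
    using assms(1-3) by (simp add: sum.remove)
  moreover have "(\<Sum>i\<in>S-{j}. f i) \<le> 0"
    using assms(4) by (intro sum_nonpos) auto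
  ultimately show ?thesis
    using assms(1,2) rest by (simp add: sum.remove)
qed

lemma mat_norm1_diag_limiter_mono:
  fixes \<beta> :: "real^'n^'n"
  assumes d: "\<forall>i. 0 \<le> d$i" and \<beta>: "\<And>i j. i \<noteq> j \<Longrightarrow> \<beta>$i$j \<le> 0"
    and \<alpha>: "\<And>i j. i \<noteq> j \<Longrightarrow> 0 \<le> \<alpha> (\<kappa> i j) \<and> \<alpha> (\<kappa> i j) \<le> \<alpha>' (\<kappa> i j)"
    and col: "\<And>j. (\<Sum>i\<in>UNIV. d$i * limiter_matrix \<beta> \<kappa> \<alpha> $i$j) = 0"
    and col': "\<And>j. (\<Sum>i\<in>UNIV. d$i * limiter_matrix \<beta> \<kappa> \<alpha>' $i$j) = 0"
  shows "mat_norm1 (diag_mat d ** limiter_matrix \<beta> \<kappa> \<alpha>)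
    \<le> mat_norm1 (diag_mat d ** limiter_matrix \<beta> \<kappa> \<alpha>')"
proof (rule mat_norm1_le)
  fix j
  define f where "f a i = d$i * limiter_matrix \<beta> \<kappa> a $i$j" for a i
  have off: "f a i = d$i * \<beta>$i$j * a (\<kappa> i j)" if "i \<noteq> j" for a i
    using that by (simp add: f_def limiter_matrix_offdiag)
  have d\<beta>: "d$i * \<beta>$i$j \<le> 0" if "i \<noteq> j" for i
    using d \<beta>[OF that] by (simp add: mult_nonneg_nonpos)
  have f_nonpos: "f \<alpha> i \<le> 0" "f \<alpha>' i \<le> 0" if "i \<noteq> j" for i
    using off[OF that] d\<beta>[OF that] \<alpha>[OF that] by (simp_all add: mult_nonpos_nonneg)
  have f_mono: "f \<alpha>' i \<le> f \<alpha> i" if "i \<noteq> j" for i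
    using off[OF that] d\<beta>[OF that] \<alpha>[OF that] by (simp add: mult_left_mono_neg)
  have norm_col: "vec_norm1 (column j (diag_mat d ** limiter_matrix \<beta> \<kappa> a)) = (\<Sum>i\<in>UNIV. \<bar>f a i\<bar>)"
    for a by (simp add: vec_norm1_def column_def diag_mat_mult_nth f_def)
  have "vec_norm1 (column j (diag_mat d ** limiter_matrix \<beta> \<kappa> \<alpha>)) = - 2 * (\<Sum>i\<in>UNIV-{j}. f \<alpha> i)"
    unfolding norm_col using col f_nonpos(1) by (intro sum_abs_eq_if_sum_eq_0) (simp_all add: f_def)
  also have "\<dots> \<le> - 2 * (\<Sum>i\<in>UNIV-{j}. f \<alpha>' i)"
    using sum_mono[of "UNIV-{j}" "f \<alpha>'" "f \<alpha>"] f_mono by simp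
  also have "\<dots> = vec_norm1 (column j (diag_mat d ** limiter_matrix \<beta> \<kappa> \<alpha>'))"
    unfolding norm_col using col' f_nonpos(2) by (intro sum_abs_eq_if_sum_eq_0[symmetric]) (simp_all add: f_def)
  also have "\<dots> \<le> mat_norm1 (diag_mat d ** limiter_matrix \<beta> \<kappa> \<alpha>')"
    by (rule vec_norm1_column_le_mat_norm1)
  finally show "vec_norm1 (column j (diag_mat d ** limiter_matrix \<beta> \<kappa> \<alpha>))
    \<le> mat_norm1 (diag_mat d ** limiter_matrix \<beta> \<kappa> \<alpha>')" .
qed

lemma mat_norm1_limiter_step_le:
  fixes X \<beta> :: "real^'n^'n"
  assumes "0 < c" and X: "\<And>u. c * vec_norm1 (X *v u) \<le> vec_norm1 (diag_mat d *v u)"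
    and d: "\<forall>i. 0 \<le> d$i" and lim: "limiter_data \<beta> \<kappa>"
    and \<alpha>: "\<And>k. k \<in> {1..CARD('n) - 1} \<Longrightarrow> 0 \<le> \<alpha> k \<and> \<alpha> k \<le> 1"
    and col: "\<forall>a j. (\<Sum>i\<in>UNIV. d$i * limiter_matrix \<beta> \<kappa> a $i$j) = 0"
    and "0 \<le> t" and cfl: "t * mat_norm1 (diag_mat d ** limiter_matrix \<beta> \<kappa> (\<lambda>_. 1)) \<le> \<gamma> * c"
  shows "mat_norm1 (t *\<^sub>R (X ** limiter_matrix \<beta> \<kappa> \<alpha>)) \<le> \<gamma>"
proof -
  have "c * mat_norm1 (X ** limiter_matrix \<beta> \<kappa> \<alpha>) \<le> mat_norm1 (diag_mat d ** limiter_matrix \<beta> \<kappa> \<alpha>)"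
    by (rule mat_norm1_mult_le_if_vec_norm1_le, rule X)
  also have "\<dots> \<le> mat_norm1 (diag_mat d ** limiter_matrix \<beta> \<kappa> (\<lambda>_. 1))"
    using d lim \<alpha> col unfolding limiter_data_def by (intro mat_norm1_diag_limiter_mono) auto
  finally have "t * (c * mat_norm1 (X ** limiter_matrix \<beta> \<kappa> \<alpha>)) \<le> \<gamma> * c"
    using mult_left_mono[OF _ \<open>0 \<le> t\<close>] cfl order_trans by blast
  then have "c * (t * mat_norm1 (X ** limiter_matrix \<beta> \<kappa> \<alpha>)) \<le> c * \<gamma>"
    by (simp add: algebra_simps)
  then show ?thesis
    using \<open>0 < c\<close> \<open>0 \<le> t\<close> by (simp add: mat_norm1_scaleR)
qed

section \<open>Unrolling the iteration\<close>

lemma lprod_above: "1 \<le> i \<Longrightarrow> p < i \<Longrightarrow> lprod Q i p = mat 1"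
  by (cases p) auto

lemma mat_norm1_lprod_le:
  assumes Q: "\<And>k. 1 \<le> k \<Longrightarrow> mat_norm1 (Q k) \<le> \<gamma>" and "0 \<le> \<gamma>" and "1 \<le> i"
  shows "mat_norm1 (lprod Q i p) \<le> \<gamma> ^ (Suc p - i)"
proof (induction p)
  case 0
  then show ?case using \<open>1 \<le> i\<close> by (simp add: mat_norm1_mat_1)
next
  case (Suc p)
  show ?case
  proof (cases "i \<le> Suc p")
    case True
    have "mat_norm1 (lprod Q i (Suc p)) \<le> mat_norm1 (Q (Suc p)) * mat_norm1 (lprod Q i p)"
      using True by (simp add: mat_norm1_mult_le)
    also have "\<dots> \<le> \<gamma> * \<gamma> ^ (Suc p - i)"
      using Q Suc.IH \<open>0 \<le> \<gamma>\<close> by (intro mult_mono mat_norm1_nonneg) auto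
    also have "\<dots> = \<gamma> ^ (Suc (Suc p) - i)"
      using True by (simp add: Suc_diff_le)
    finally show ?thesis .
  next
    case False
    then show ?thesis by (simp add: mat_norm1_mat_1)
  qed
qed

lemma matrix_mult_sum_right: "(A :: 'a::comm_ring_1^'n^'n) ** sum f S = (\<Sum>i\<in>S. A ** f i)"
  by (induction S rule: infinite_finite_induct) (auto simp: matrix_add_ldistrib)

lemma lprod_sum_mult_Suc:
  "(\<Sum>i\<in>{1..Suc p}. lprod Q (i + 1) (Suc p) ** T i)
    = Q (Suc p) ** (\<Sum>i\<in>{1..p}. lprod Q (i + 1) p ** T i) + T (Suc p)"
  by (simp add: matrix_mult_sum_right matrix_mul_assoc lprod_above)

lemma lprod_sum_Suc:
  assumes "1 \<le> p"
  shows "(\<Sum>i\<in>{2..Suc p}. lprod Q i (Suc p)) = Q (Suc p) ** (mat 1 + (\<Sum>i\<in>{2..p}. lprod Q i p))"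
proof -
  have "(\<Sum>i\<in>{2..Suc p}. lprod Q i (Suc p)) = (\<Sum>i\<in>{2..p}. lprod Q i (Suc p)) + Q (Suc p)"
    using assms by (simp add: lprod_above)
  also have "(\<Sum>i\<in>{2..p}. lprod Q i (Suc p)) = Q (Suc p) ** (\<Sum>i\<in>{2..p}. lprod Q i p)"
    unfolding matrix_mult_sum_right by (rule sum.cong) auto
  finally show ?thesis by (simp add: matrix_add_ldistrib add.commute)
qed

lemma affine_recurrence_closed_form:
  fixes T Q :: "nat \<Rightarrow> real^'n^'n"
  assumes "y 0 = y0" and step: "\<And>p. 1 \<le> p \<Longrightarrow> y p = r + T p *v y0 + Q p *v y (p - 1)"
    and "1 \<le> p"
  shows "y p = ((\<Sum>i\<in>{1..p}. lprod Q (i + 1) p ** T i) + lprod Q 1 p) *v y0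
               + (mat 1 + (\<Sum>i\<in>{2..p}. lprod Q i p)) *v r"
  using \<open>1 \<le> p\<close>
proof (induction p rule: nat_induct_at_least)
  case base
  then show ?case
    using step[of 1] \<open>y 0 = y0\<close> by (simp add: lprod_above matrix_vector_mult_add_rdistrib add_ac)
next
  case (Suc p)
  have "y (Suc p) = r + T (Suc p) *v y0 + Q (Suc p) *v y p"
    using step[of "Suc p"] by simp
  then show ?case
    unfolding Suc.IH lprod_sum_mult_Suc lprod_sum_Suc[OF Suc.hyps] lprod.simps(2)[of Q 1]
    by (simp add: matrix_vector_mult_add_rdistrib matrix_vector_right_distrib
        matrix_add_ldistrib matrix_vector_mul_assoc[symmetric] add_ac)
qed

lemma mat_norm1_lprod_mult_le:
  assumes "\<And>k. 1 \<le> k \<Longrightarrow> mat_norm1 (Q k) \<le> \<gamma>" and "mat_norm1 X \<le> \<gamma>" and "0 \<le> \<gamma>"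
    and "i \<le> p"
  shows "mat_norm1 (lprod Q (i + 1) p ** X) \<le> \<gamma> ^ (p - i + 1)"
proof -
  have "mat_norm1 (lprod Q (i + 1) p ** X) \<le> mat_norm1 (lprod Q (i + 1) p) * mat_norm1 X"
    by (rule mat_norm1_mult_le)
  also have "\<dots> \<le> \<gamma> ^ (Suc p - (i + 1)) * \<gamma>"
    using assms by (intro mult_mono mat_norm1_lprod_le mat_norm1_nonneg) auto
  finally show ?thesis by (simp add: mult.commute)
qed

theorem theorem7:
  fixes A0 A1 :: "real^'n^'n"
    and d :: "real^'n"
    and \<beta>0 \<beta>1 :: "real^'n^'n"
    and \<kappa>0 \<kappa>1 :: "'n \<Rightarrow> 'n \<Rightarrow> nat"
    and \<sigma> \<gamma> \<Delta>t :: real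
    and yn g :: "real^'n"
    and \<alpha>0 \<alpha>1 :: "nat \<Rightarrow> nat \<Rightarrow> real"
    and y :: "nat \<Rightarrow> real^'n"
  defines "D \<equiv> diag_mat d"
    and "B0 \<equiv> limiter_matrix \<beta>0 \<kappa>0"
    and "B1 \<equiv> limiter_matrix \<beta>1 \<kappa>1"
    and "s \<equiv> (\<lambda>j. d$j + \<Delta>t * \<sigma> * (\<Sum>i\<in>UNIV. d$i * A1$i$j))"
    and "M \<equiv> mat 1 + (\<Delta>t * \<sigma>) *\<^sub>R A1"
    and "T \<equiv> (\<lambda>p. (\<Delta>t * (1 - \<sigma>)) *\<^sub>R (matrix_inv (mat 1 + (\<Delta>t * \<sigma>) *\<^sub>R A1) ** limiter_matrix \<beta>0 \<kappa>0 (\<alpha>0 p)))"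
    and "Q \<equiv> (\<lambda>p. (\<Delta>t * \<sigma>) *\<^sub>R (matrix_inv (mat 1 + (\<Delta>t * \<sigma>) *\<^sub>R A1) ** limiter_matrix \<beta>1 \<kappa>1 (\<alpha>1 p)))"
    and "r \<equiv> matrix_inv (mat 1 + (\<Delta>t * \<sigma>) *\<^sub>R A1) *v ((mat 1 - (\<Delta>t * (1 - \<sigma>)) *\<^sub>R A0) *v yn + \<Delta>t *\<^sub>R g)"
  assumes M0: "condM A0" and M1: "condM A1"
    and dpos: "\<forall>i. d$i > 0"
    and colA1: "\<forall>j. (\<Sum>i\<in>UNIV. d$i * A1$i$j) \<ge> 0"
    and lim0: "limiter_data \<beta>0 \<kappa>0" and lim1: "limiter_data \<beta>1 \<kappa>1"
    and colB0: "\<forall>\<alpha> j. (\<Sum>i\<in>UNIV. d$i * B0 \<alpha> $i$j) = 0"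
    and colB1: "\<forall>\<alpha> j. (\<Sum>i\<in>UNIV. d$i * B1 \<alpha> $i$j) = 0"
    and sig: "0 \<le> \<sigma>" "\<sigma> \<le> 1"
    and gam: "0 < \<gamma>" "\<gamma> < 1"
    and dt: "\<Delta>t > 0"
    and cfl: "\<Delta>t * max ((1 - \<sigma>) * mat_norm1 (D ** B0 (\<lambda>_. 1)))
                         (\<sigma> * mat_norm1 (D ** B1 (\<lambda>_. 1)))
              \<le> \<gamma> * Min (range s)"
    and alpha0: "\<forall>p k. p \<ge> 1 \<longrightarrow> k \<in> {1..CARD('n) - 1} \<longrightarrow> 0 \<le> \<alpha>0 p k \<and> \<alpha>0 p k \<le> 1"
    and alpha1: "\<forall>p k. p \<ge> 1 \<longrightarrow> k \<in> {1..CARD('n) - 1} \<longrightarrow> 0 \<le> \<alpha>1 p k \<and> \<alpha>1 p k \<le> 1"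
    and y0: "y 0 = yn"
    and ystep: "\<forall>p. p \<ge> 1 \<longrightarrow>
       M *v y p = (mat 1 - (\<Delta>t * (1 - \<sigma>)) *\<^sub>R (A0 - limiter_matrix \<beta>0 \<kappa>0 (\<alpha>0 p))) *v yn
                  + (\<Delta>t * \<sigma>) *\<^sub>R (limiter_matrix \<beta>1 \<kappa>1 (\<alpha>1 p) *v y (p - 1)) + \<Delta>t *\<^sub>R g"
  shows "invertible M
    \<and> (\<forall>p. p \<ge> 1 \<longrightarrow>
         y p = ((\<Sum>i\<in>{1..p}. lprod Q (i + 1) p ** T i) + lprod Q 1 p) *v yn
               + (mat 1 + (\<Sum>i\<in>{2..p}. lprod Q i p)) *v r)
    \<and> (\<forall>p. p \<ge> 1 \<longrightarrow> mat_norm1 (T p) \<le> \<gamma> \<and> mat_norm1 (Q p) \<le> \<gamma>)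
    \<and> (\<forall>p i. 1 \<le> i \<and> i \<le> p \<longrightarrow>
         mat_norm1 (lprod Q (i + 1) p ** T i) \<le> \<gamma> ^ (p - i + 1)
         \<and> mat_norm1 (lprod Q i p) \<le> \<gamma> ^ (p - i + 1))"
proof -
  define c where "c = Min (range s)"
  have c_def': "c = Min (range (\<lambda>j. d$j + (\<Delta>t * \<sigma>) * (\<Sum>i\<in>UNIV. d$i * A1$i$j)))"
    by (simp add: c_def s_def)
  have c_pos: "0 < c" and invM: "invertible M"
    and inv_bound: "\<And>u. c * vec_norm1 (matrix_inv M *v u) \<le> vec_norm1 (diag_mat d *v u)"
    unfolding M_def using implicit_matrix_inverse_bound[OF M1 _ dpos colA1 c_def'] sig dt by auto
  have d_nonneg: "\<forall>i. 0 \<le> d$i"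
    using dpos by (simp add: less_imp_le)
  have cfl_le: "\<Delta>t * (1 - \<sigma>) * mat_norm1 (D ** B0 (\<lambda>_. 1)) \<le> \<gamma> * c"
    "\<Delta>t * \<sigma> * mat_norm1 (D ** B1 (\<lambda>_. 1)) \<le> \<gamma> * c"
    using order_trans[OF mult_left_mono cfl] dt by (simp_all add: c_def mult.assoc)
  have T_bound: "mat_norm1 (T p) \<le> \<gamma>" and Q_bound: "mat_norm1 (Q p) \<le> \<gamma>" if "1 \<le> p" for p
    unfolding T_def Q_def M_def[symmetric]
    using alpha0 alpha1 colB0 colB1 lim0 lim1 cfl_le sig dt that
    by (auto intro!: mat_norm1_limiter_step_le[OF c_pos inv_bound d_nonneg] simp: D_def B0_def B1_def)
  have recurrence: "y p = r + T p *v yn + Q p *v y (p - 1)" if "1 \<le> p" for p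
  proof -
    have "y p = matrix_inv M *v (M *v y p)"
      by (simp add: matrix_vector_mul_assoc matrix_inv_left[OF invM])
    then show ?thesis
      using ystep that
      by (simp add: T_def Q_def r_def M_def[symmetric] algebra_simps matrix_vector_right_distrib
          scaleR_matrix_vector_assoc[symmetric] matrix_vector_mult_scaleR matrix_vector_mul_assoc[symmetric])
  qed
  have product_bounds: "mat_norm1 (lprod Q (i + 1) p ** T i) \<le> \<gamma> ^ (p - i + 1)
      \<and> mat_norm1 (lprod Q i p) \<le> \<gamma> ^ (p - i + 1)" if "1 \<le> i" "i \<le> p" for p i
    using mat_norm1_lprod_mult_le[of Q \<gamma> "T i" i p] mat_norm1_lprod_le[of Q \<gamma> i p]
      Q_bound T_bound that gam by (simp add: Suc_diff_le)
  show ?thesis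
    using invM affine_recurrence_closed_form[of y yn r T Q, OF y0 recurrence]
      T_bound Q_bound product_bounds by blast
qed

end
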